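(* Let $f$, $c$, $h$, $\tilde h$ be as in the context, let $F_0$ be a probability distribution on $[\mu_{\min},\mu_{\max}]$ and let $L_{F_0}$ be the unique solution of $\int_{\mu_{\min}}^{\mu_{\max}}\mu\frac{1+\beta}{\bar\mu_{F_0}(1+L_{F_0}\tilde h(\mu))}dF_0(\mu)=\beta$. Then for any $a>0$ the function \[ U(\mu)=f\Big(\big(1+L_{F_0}\tilde h(\mu)\big)^{-1}\Big)-a\,c(\mu) \] is concave on $[\mu_{\min},\mu_{\max}]$.
   Context: $0<\mu_{\min}\le\mu_{\max}<\infty$, $\beta>0$; $\bar\mu_{F_0}$ is the mean of $F_0$. The utility-of-idleness function $f$ is concave, increasing and twice continuously differentiable; the effort cost function $c$ is convex, increasing and twice continuously differentiable. $h:[\mu_{\min},\mu_{\max}]\to\mathbb R$ satisfies $h(\mu)>0$, and $\tilde h(\mu)=h(\mu)/\mu$ is convex, strictly decreasing, twice differentiable, and satisfies $2\tilde h'(\mu)^2\le\tilde h(\mu)\tilde h''(\mu)$ for all $\mu\in[\mu_{\min},\mu_{\max}]$. *)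

theory Defs
  imports "HOL-Probability.Probability"
begin

text \<open>Twice continuously differentiable on a set S (derivatives taken within S,
  so that closed intervals are handled via one-sided derivatives at the endpoints).\<close>
definition C2_on :: "real set \<Rightarrow> (real \<Rightarrow> real) \<Rightarrow> bool" where
  "C2_on S g \<longleftrightarrow> (\<exists>g' g''. (\<forall>x\<in>S. (g has_real_derivative g' x) (at x within S)
       \<and> (g' has_real_derivative g'' x) (at x within S)) \<and> continuous_on S g'')"

end

theory Submission
  imports Defs
begin

text \<open>The hypothesis \<open>2 ht'\<^sup>2 \<le> ht ht''\<close> says exactly that \<open>1 / ht\<close> is concave. The defining
  equation of \<open>L\<close> forces \<open>L \<ge> 0\<close>: for \<open>L < 0\<close> its integrand dominates \<open>(1 + \<beta>) \<mu> / m\<close>, where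
  \<open>m\<close> is the mean of \<open>F\<^sub>0\<close>, and that has integral \<open>1 + \<beta> > \<beta>\<close>. Then
  \<open>1 / (1 + L ht) = \<phi> (1 / ht)\<close> for the concave nondecreasing \<open>\<phi> s = s / (s + L)\<close>, so it is
  concave with values in \<open>[0, 1]\<close>; composing with the concave nondecreasing \<open>f\<close> and subtracting
  the convex \<open>a c\<close> keeps concavity.\<close>

lemma concave_on_Icc_if_concave_on_Ioo:
  fixes F :: "real \<Rightarrow> real"
  assumes cont: "continuous_on {a..b} F" and concave: "concave_on {a<..<b} F"
  shows "concave_on {a..b} F"
proof (rule concave_on_linorderI)
  fix t x y :: real
  assume t: "0 < t" "t < 1" and xy: "x \<in> {a..b}" "y \<in> {a..b}" "x < y"
  define p where "p e = x + e * (y - x)" for e :: real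
  define q where "q e = y - e * (y - x)" for e :: real
  define z where "z e = (1 - t) * p e + t * q e" for e :: real
  have inner: "p e \<in> {a<..<b} \<and> q e \<in> {a<..<b}" if "0 < e" "e < 1" for e
  proof -
    have "0 < e * (y - x)" "e * (y - x) < y - x"
      using that xy mult_strict_right_mono[of e 1 "y - x"] by simp_all
    with xy show ?thesis unfolding p_def q_def by auto
  qed
  have ev_inner: "\<forall>\<^sub>F e in at_right 0. p e \<in> {a<..<b} \<and> q e \<in> {a<..<b}"
    unfolding eventually_at_right_field using inner by (intro exI[of _ 1]) auto
  have conv: "convex {a..b}" by simp
  have ev_p: "\<forall>\<^sub>F e in at_right 0. p e \<in> {a..b}" and ev_q: "\<forall>\<^sub>F e in at_right 0. q e \<in> {a..b}"
    using ev_inner by (auto elim: eventually_mono)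
  have ev_z: "\<forall>\<^sub>F e in at_right 0. z e \<in> {a..b}"
    using ev_inner by eventually_elim (use t convexD[OF conv, of "p _" "q _" "1 - t" t] in \<open>auto simp: z_def\<close>)
  have lim_p: "(p \<longlongrightarrow> x) (at_right 0)" and lim_q: "(q \<longlongrightarrow> y) (at_right 0)"
    unfolding p_def q_def by (auto intro!: tendsto_eq_intros)
  have "((\<lambda>e. (1 - t) * F (p e) + t * F (q e)) \<longlongrightarrow> (1 - t) * F x + t * F y) (at_right 0)"
    using xy by (intro tendsto_intros continuous_on_tendsto_compose[OF cont] lim_p lim_q ev_p ev_q) auto
  moreover have "((\<lambda>e. F (z e)) \<longlongrightarrow> F ((1 - t) * x + t * y)) (at_right 0)"
    using xy convexD[OF conv, of x y "1 - t" t] t unfolding z_def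
    by (intro continuous_on_tendsto_compose[OF cont] tendsto_intros lim_p lim_q)
      (use ev_z in \<open>auto simp: z_def\<close>)
  moreover have "\<forall>\<^sub>F e in at_right 0. (1 - t) * F (p e) + t * F (q e) \<le> F (z e)"
    using ev_inner by eventually_elim (use concave_onD[OF concave, of t] t in \<open>auto simp: z_def\<close>)
  ultimately show "(1 - t) * F x + t * F y \<le> F ((1 - t) *\<^sub>R x + t *\<^sub>R y)"
    by (simp add: tendsto_le[OF trivial_limit_at_right_real])
qed simp

lemma concave_on_inverse_Icc:
  fixes g g' g'' :: "real \<Rightarrow> real"
  assumes pos: "\<forall>x\<in>{a..b}. g x > 0"
    and d1: "\<forall>x\<in>{a..b}. (g has_real_derivative g' x) (at x within {a..b})"
    and d2: "\<forall>x\<in>{a..b}. (g' has_real_derivative g'' x) (at x within {a..b})"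
    and ineq: "\<forall>x\<in>{a..b}. 2 * (g' x)\<^sup>2 \<le> g x * g'' x"
  shows "concave_on {a..b} (\<lambda>x. inverse (g x))"
proof (rule concave_on_Icc_if_concave_on_Ioo)
  show "continuous_on {a..b} (\<lambda>x. inverse (g x))"
    using pos DERIV_continuous_on[of "{a..b}" g g'] d1 by (auto intro!: continuous_on_inverse)
  have deriv: "DERIV g x :> g' x" "DERIV g' x :> g'' x" if "x \<in> {a<..<b}" for x
    using d1[rule_format, of x] d2[rule_format, of x] that by (simp_all add: at_within_Icc_at)
  then show "concave_on {a<..<b} (\<lambda>x. inverse (g x))"
  proof (intro f''_le0_imp_concave[where f' = "\<lambda>x. - g' x / (g x)\<^sup>2"
        and f'' = "\<lambda>x. (2 * (g' x)\<^sup>2 - g x * g'' x) / g x ^ 3"])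
    fix x assume x: "x \<in> {a<..<b}"
    then have gx: "g x > 0" using pos by auto
    show "((\<lambda>x. inverse (g x)) has_real_derivative - g' x / (g x)\<^sup>2) (at x)"
      using gx by (auto intro!: derivative_eq_intros deriv[OF x] simp: power2_eq_square divide_inverse)
    show "((\<lambda>x. - g' x / (g x)\<^sup>2) has_real_derivative (2 * (g' x)\<^sup>2 - g x * g'' x) / g x ^ 3) (at x)"
      using gx by (auto intro!: derivative_eq_intros deriv[OF x] simp: field_simps power2_eq_square power3_eq_cube)
    show "(2 * (g' x)\<^sup>2 - g x * g'' x) / g x ^ 3 \<le> 0"
      using gx ineq x by (intro divide_nonpos_pos) auto
  qed simp
qed

lemma concave_on_compose_mono:
  fixes f :: "real \<Rightarrow> real" and g :: "'a::real_vector \<Rightarrow> real"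
  assumes f: "concave_on T f" "mono_on T f" and g: "concave_on S g" "g ` S \<subseteq> T"
  shows "concave_on S (\<lambda>x. f (g x))"
  unfolding concave_on_iff
proof (intro conjI ballI allI impI)
  show "convex S" using g(1) by (rule concave_on_imp_convex)
  fix x y and u v :: real
  assume xy: "x \<in> S" "y \<in> S" and uv: "0 \<le> u" "0 \<le> v" "u + v = 1"
  have T: "convex T" using f(1) by (rule concave_on_imp_convex)
  have "g x \<in> T" "g y \<in> T" using g(2) xy by auto
  then have "u * f (g x) + v * f (g y) \<le> f (u * g x + v * g y)"
    using concave_on_iff[THEN iffD1, OF f(1)] uv by simp
  also have "\<dots> \<le> f (g (u *\<^sub>R x + v *\<^sub>R y))"
  proof (rule mono_onD[OF f(2)])
    show "u * g x + v * g y \<in> T" using convexD[OF T] \<open>g x \<in> T\<close> \<open>g y \<in> T\<close> uv by simp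
    show "g (u *\<^sub>R x + v *\<^sub>R y) \<in> T" using convexD[OF \<open>convex S\<close>] g(2) xy uv by auto
    show "u * g x + v * g y \<le> g (u *\<^sub>R x + v *\<^sub>R y)"
      using concave_on_iff[THEN iffD1, OF g(1)] xy uv by auto
  qed
  finally show "u * f (g x) + v * f (g y) \<le> f (g (u *\<^sub>R x + v *\<^sub>R y))" .
qed

lemma concave_on_divide_add_const:
  fixes L :: real
  assumes "0 \<le> L"
  shows "concave_on {0<..} (\<lambda>s. s / (s + L))"
proof (intro f''_le0_imp_concave[where f' = "\<lambda>s. L / (s + L)\<^sup>2" and f'' = "\<lambda>s. - 2 * L / (s + L) ^ 3"])
  fix s :: real assume "s \<in> {0<..}"
  then have s: "s + L > 0" "s + L \<noteq> 0" using assms by simp_all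
  show "((\<lambda>s. s / (s + L)) has_real_derivative L / (s + L)\<^sup>2) (at s)"
    using s by (auto intro!: derivative_eq_intros simp: field_simps power2_eq_square)
  show "((\<lambda>s. L / (s + L)\<^sup>2) has_real_derivative - 2 * L / (s + L) ^ 3) (at s)"
    using s by (auto intro!: derivative_eq_intros simp: divide_simps eval_nat_numeral)
  show "- 2 * L / (s + L) ^ 3 \<le> 0"
    using s assms by (intro divide_nonpos_pos) auto
qed simp

lemma mono_on_divide_add_const:
  fixes L :: real
  assumes "0 \<le> L"
  shows "mono_on {0<..} (\<lambda>s. s / (s + L))"
proof (rule mono_onI)
  fix s t :: real assume "s \<in> {0<..}" "t \<in> {0<..}" "s \<le> t"
  moreover have "s * L \<le> t * L" using \<open>s \<le> t\<close> assms by (rule mult_right_mono)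
  ultimately show "s / (s + L) \<le> t / (t + L)"
    using assms by (simp add: divide_simps algebra_simps)
qed

lemma concave_on_inverse_one_plus_mult:
  fixes g :: "'a::real_vector \<Rightarrow> real"
  assumes L: "0 \<le> L" and pos: "\<forall>x\<in>S. g x > 0" and concave: "concave_on S (\<lambda>x. inverse (g x))"
  shows "concave_on S (\<lambda>x. inverse (1 + L * g x))"
proof -
  have "(\<lambda>x. inverse (g x)) ` S \<subseteq> {0<..}" using pos by auto
  then have "concave_on S (\<lambda>x. inverse (g x) / (inverse (g x) + L))"
    by (rule concave_on_compose_mono[OF concave_on_divide_add_const[OF L] mono_on_divide_add_const[OF L] concave])
  moreover have "inverse (g x) / (inverse (g x) + L) = inverse (1 + L * g x)" if "x \<in> S" for x
    using pos[rule_format, OF that] by (simp add: field_simps)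
  ultimately show ?thesis by (auto simp: concave_on_iff convex_def)
qed

lemma set_integral_id_eq_integral:
  fixes M :: "real measure" and a b :: real
  assumes "prob_space M" and sets: "sets M = sets borel" and supp: "AE x in M. x \<in> {a..b}"
  shows "integrable M (\<lambda>x. x)" and "(LINT x:{a..b}|M. x) = (LINT x|M. x)"
proof -
  interpret prob_space M by fact
  have meas: "(\<lambda>x. x) \<in> borel_measurable M"
    by (rule measurable_ident_sets[OF sets])
  have "AE x in M. norm x \<le> max \<bar>a\<bar> \<bar>b\<bar>"
    using supp by eventually_elim auto
  then show "integrable M (\<lambda>x. x)"
    by (rule integrable_const_bound) (rule meas)
  show "(LINT x:{a..b}|M. x) = (LINT x|M. x)"
    unfolding set_lebesgue_integral_def
    by (rule integral_cong_AE) (use meas sets supp in auto)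
qed

lemma mean_equation_solution_nonneg:
  fixes M :: "real measure" and ht :: "real \<Rightarrow> real" and a b \<beta> L :: real
  assumes "prob_space M" and sets: "sets M = sets borel" and supp: "AE x in M. x \<in> {a..b}"
    and a: "0 < a" and \<beta>: "0 < \<beta>" and ht_pos: "\<forall>x\<in>{a..b}. 0 < ht x"
    and dom: "\<forall>x\<in>{a..b}. 0 < 1 + L * ht x"
    and eq: "(LINT x:{a..b}|M. x * (1 + \<beta>) / ((LINT x|M. x) * (1 + L * ht x))) = \<beta>"
  shows "0 \<le> L"
proof (rule ccontr)
  interpret prob_space M by fact
  assume "\<not> 0 \<le> L"
  define m where "m = (LINT x|M. x)"
  define k where "k x = x * (1 + \<beta>) / (m * (1 + L * ht x))" for x
  have int: "integrable M (\<lambda>x. x)" and set_mean: "(LINT x:{a..b}|M. x) = m"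
    using set_integral_id_eq_integral[OF \<open>prob_space M\<close> sets supp] by (simp_all add: m_def)
  have "a \<le> m"
    unfolding m_def using supp by (intro integral_ge_const int) (auto elim!: eventually_mono)
  then have m: "0 < m" using a by simp
  \<comment> \<open>a non-integrable integrand would have integral \<open>0 \<noteq> \<beta>\<close>\<close>
  have k_int: "set_integrable M {a..b} k"
  proof (rule ccontr)
    assume "\<not> set_integrable M {a..b} k"
    then have "(LINT x:{a..b}|M. k x) = 0"
      unfolding set_lebesgue_integral_def set_integrable_def by (rule not_integrable_integral_eq)
    then show False using eq \<beta> by (simp add: k_def m_def)
  qed
  have k_ge: "(1 + \<beta>) / m * x \<le> k x" if "x \<in> {a..b}" for x
  proof -
    define X where "X = (1 + \<beta>) / m * x"
    have "0 \<le> X" using that a m \<beta> by (simp add: X_def)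
    moreover have D: "0 < 1 + L * ht x" "1 + L * ht x \<le> 1"
      using dom ht_pos[rule_format, OF that] that mult_nonpos_nonneg[of L "ht x"] \<open>\<not> 0 \<le> L\<close> by auto
    ultimately have "X * (1 + L * ht x) \<le> X" by (simp add: mult_left_le)
    then have "X \<le> X / (1 + L * ht x)" using D by (simp add: le_divide_eq)
    then show ?thesis by (simp add: X_def k_def mult.commute)
  qed
  have id_int: "set_integrable M {a..b} (\<lambda>x. x)"
    unfolding set_integrable_def using sets int by (intro integrable_mult_indicator) auto
  have "1 + \<beta> = (LINT x:{a..b}|M. (1 + \<beta>) / m * x)"
    using set_mean m by simp
  also have "\<dots> \<le> (LINT x:{a..b}|M. k x)"
    by (rule set_integral_mono[OF set_integrable_mult_right[OF id_int] k_int k_ge])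
  also have "\<dots> = \<beta>" using eq by (simp add: k_def m_def)
  finally show False by simp
qed

theorem lemma5:
  fixes \<mu>min \<mu>max \<beta> a L :: real
    and f c h ht ht' ht'' :: "real \<Rightarrow> real"
    and F0 :: "real measure"
  assumes mu_pos: "0 < \<mu>min" and mu_le: "\<mu>min \<le> \<mu>max"
    and beta_pos: "\<beta> > 0"
    and f_concave: "concave_on {0..1} f" and f_mono: "mono_on {0..1} f" and f_C2: "C2_on {0..1} f"
    and c_convex: "convex_on {\<mu>min..\<mu>max} c" and c_mono: "mono_on {\<mu>min..\<mu>max} c"
    and c_C2: "C2_on {\<mu>min..\<mu>max} c"
    and h_pos: "\<forall>\<mu>\<in>{\<mu>min..\<mu>max}. h \<mu> > 0"
    and ht_def: "\<forall>\<mu>. ht \<mu> = h \<mu> / \<mu>"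
    and ht_convex: "convex_on {\<mu>min..\<mu>max} ht"
    and ht_strict_decr: "\<forall>x\<in>{\<mu>min..\<mu>max}. \<forall>y\<in>{\<mu>min..\<mu>max}. x < y \<longrightarrow> ht y < ht x"
    and ht_deriv1: "\<forall>\<mu>\<in>{\<mu>min..\<mu>max}. (ht has_real_derivative ht' \<mu>) (at \<mu> within {\<mu>min..\<mu>max})"
    and ht_deriv2: "\<forall>\<mu>\<in>{\<mu>min..\<mu>max}. (ht' has_real_derivative ht'' \<mu>) (at \<mu> within {\<mu>min..\<mu>max})"
    and ht_ineq: "\<forall>\<mu>\<in>{\<mu>min..\<mu>max}. 2 * (ht' \<mu>)\<^sup>2 \<le> ht \<mu> * ht'' \<mu>"
    and F0_prob: "prob_space F0" and F0_sets: "sets F0 = sets borel"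
    and F0_supp: "measure F0 {\<mu>min..\<mu>max} = 1"
    and L_dom: "\<forall>\<mu>\<in>{\<mu>min..\<mu>max}. 1 + L * ht \<mu> > 0"
    and L_eq: "(LINT \<mu>:{\<mu>min..\<mu>max}|F0. \<mu> * (1 + \<beta>) / ((LINT x|F0. x) * (1 + L * ht \<mu>))) = \<beta>"
    and L_unique: "\<forall>L'. (\<forall>\<mu>\<in>{\<mu>min..\<mu>max}. 1 + L' * ht \<mu> > 0)
        \<and> (LINT \<mu>:{\<mu>min..\<mu>max}|F0. \<mu> * (1 + \<beta>) / ((LINT x|F0. x) * (1 + L' * ht \<mu>))) = \<beta>
        \<longrightarrow> L' = L"
    and a_pos: "a > 0"
  shows "concave_on {\<mu>min..\<mu>max} (\<lambda>\<mu>. f (inverse (1 + L * ht \<mu>)) - a * c \<mu>)"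
proof -
  interpret prob_space F0 by (rule F0_prob)
  have supp: "AE \<mu> in F0. \<mu> \<in> {\<mu>min..\<mu>max}"
    using AE_prob_1[of "{\<mu>min..\<mu>max}"] F0_supp by blast
  have ht_pos: "\<forall>\<mu>\<in>{\<mu>min..\<mu>max}. 0 < ht \<mu>"
    using h_pos ht_def mu_pos by auto
  have L: "0 \<le> L"
    by (rule mean_equation_solution_nonneg[OF F0_prob F0_sets supp mu_pos beta_pos ht_pos L_dom L_eq])
  have "concave_on {\<mu>min..\<mu>max} (\<lambda>\<mu>. inverse (ht \<mu>))"
    by (rule concave_on_inverse_Icc[OF ht_pos ht_deriv1 ht_deriv2 ht_ineq])
  then have g: "concave_on {\<mu>min..\<mu>max} (\<lambda>\<mu>. inverse (1 + L * ht \<mu>))"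
    by (rule concave_on_inverse_one_plus_mult[OF L ht_pos])
  have "1 \<le> 1 + L * ht \<mu>" if "\<mu> \<in> {\<mu>min..\<mu>max}" for \<mu>
    using L ht_pos[rule_format, OF that] by simp
  then have "(\<lambda>\<mu>. inverse (1 + L * ht \<mu>)) ` {\<mu>min..\<mu>max} \<subseteq> {0..1}"
    by (auto simp: inverse_le_1_iff)
  then have "concave_on {\<mu>min..\<mu>max} (\<lambda>\<mu>. f (inverse (1 + L * ht \<mu>)))"
    by (rule concave_on_compose_mono[OF f_concave f_mono g])
  moreover have "convex_on {\<mu>min..\<mu>max} (\<lambda>\<mu>. a * c \<mu>)"
    using c_convex a_pos by (intro convex_on_cmul) auto
  ultimately show ?thesis by (rule concave_on_diff)
qed

end
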